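(* Let $\lambda_1,\lambda_2>0$, $\alpha\in\mathbb{R}\setminus\{0\}$, let $\delta^{\star}(\alpha)=1/\alpha^2$ if $\alpha\le 2$ and $\delta^{\star}(\alpha)=\frac{1}{2\alpha}\exp\{1-\frac{\alpha}{2}\}$ if $\alpha>2$, and $|\delta|\le\delta^{\star}(\alpha)$. Let $(X,Y)$ be a random vector on $(0,\infty)^2$ with joint distribution function $$F(x,y)=\left(1-e^{-x^2/2\lambda_1^2}\right)\left(1-e^{-y^2/2\lambda_2^2}\right)+\delta\left(1-e^{\alpha\left(e^{-x^2/2\lambda_1^2}-e^{-x^2/\lambda_1^2}\right)}\right)\left(1-e^{\alpha\left(e^{-y^2/2\lambda_2^2}-e^{-y^2/\lambda_2^2}\right)}\right),\quad x,y>0.$$ Then for all real $r,s\ge0$, $$E(X^rY^s)=\lambda_1^r\lambda_2^s2^{(r+s)/2}\Gamma\!\left(1+\tfrac r2\right)\Gamma\!\left(1+\tfrac s2\right)\left[1+\delta\alpha^2 S_r S_s\right],$$ where for $m\ge0$ $$S_m=\sum_{k=0}^{\infty}\frac{\alpha^k}{k!}\sum_{t=0}^{k}(-1)^t\binom{k}{t}\left(2(k+t+2)^{-\frac{m+2}{2}}-(k+t+1)^{-\frac{m+2}{2}}\right).$$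
   Context: $\Gamma$ denotes the gamma function. *)

theory Defs
  imports "HOL-Probability.Probability"
begin

definition delta_star :: "real \<Rightarrow> real" where
  "delta_star \<alpha> = (if \<alpha> \<le> 2 then 1 / \<alpha>\<^sup>2 else (1 / (2 * \<alpha>)) * exp (1 - \<alpha> / 2))"

definition F_joint :: "real \<Rightarrow> real \<Rightarrow> real \<Rightarrow> real \<Rightarrow> real \<Rightarrow> real \<Rightarrow> real" where
  "F_joint l1 l2 \<alpha> \<delta> x y =
     (1 - exp (- x\<^sup>2 / (2 * l1\<^sup>2))) * (1 - exp (- y\<^sup>2 / (2 * l2\<^sup>2)))
     + \<delta> * (1 - exp (\<alpha> * (exp (- x\<^sup>2 / (2 * l1\<^sup>2)) - exp (- x\<^sup>2 / l1\<^sup>2))))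
         * (1 - exp (\<alpha> * (exp (- y\<^sup>2 / (2 * l2\<^sup>2)) - exp (- y\<^sup>2 / l2\<^sup>2))))"

definition S_coef :: "real \<Rightarrow> real \<Rightarrow> real" where
  "S_coef \<alpha> m = (\<Sum>k. \<alpha> ^ k / fact k *
     (\<Sum>t = 0..k. (-1) ^ t * real (k choose t) *
        (2 * (real (k + t + 2)) powr (- (m + 2) / 2) - (real (k + t + 1)) powr (- (m + 2) / 2))))"

end

theory Submission
  imports Defs "HOL-Real_Asymp.Real_Asymp"
begin

text \<open>
  Letting \<open>y \<rightarrow> \<infinity>\<close> in \<open>F\<close> shows that both marginals are Rayleigh, with survival
  functions \<open>w\<^sub>i(x) = exp (- x\<^sup>2 / (2 \<lambda>\<^sub>i\<^sup>2))\<close>, and inclusion-exclusion turns \<open>F\<close> into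
  \<open>P(X > a, Y > b) = w\<^sub>1(a) w\<^sub>2(b) + \<delta> v\<^sub>1(a) v\<^sub>2(b)\<close> with \<open>v = 1 - exp (\<alpha> (w - w\<^sup>2))\<close>.
  Let \<open>\<mu>\<^sub>r\<close> be the measure with density \<open>r a\<^bsup>r-1\<^esup>\<close> on \<open>[0, \<infinity>)\<close> (a unit mass at 0
  if \<open>r = 0\<close>), so that \<open>x\<^sup>r = \<mu>\<^sub>r [0, x)\<close>. Tonelli then gives
  \<open>E(X\<^sup>r Y\<^sup>s) = \<integral>\<integral> P(X > a, Y > b) d\<mu>\<^sub>s(b) d\<mu>\<^sub>r(a)\<close>, which splits along the two
  products. The integrals \<open>\<integral> w\<^sup>n d\<mu>\<^sub>r = \<lambda>\<^sup>r 2\<^bsup>r/2\<^esup> \<Gamma>(1 + r/2) n\<^bsup>-r/2\<^esup>\<close> are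
  Gaussian moments, and \<open>\<integral> v d\<mu>\<^sub>r\<close> is obtained by expanding the exponential into its
  power series and \<open>(w - w\<^sup>2)\<^bsup>k+1\<^esup>\<close> binomially. The identity
  \<open>C(k+1, t) (k+1+t) = (k+1) (C(k, t) + 2 C(k, t-1))\<close> regroups the resulting alternating
  sums into the summands of \<open>S\<^sub>r\<close>.
\<close>

section \<open>Series expansions\<close>

lemma Suc_choose_Suc_times:
  "(Suc k choose Suc t) * (Suc k + Suc t) = Suc k * ((k choose Suc t) + 2 * (k choose t))"
proof -
  have "Suc t * (Suc k choose Suc t) = Suc k * (k choose t)"
    by (metis Suc_times_binomial_eq mult.commute)
  then show ?thesis by (simp add: algebra_simps)
qed

lemma alternating_sum_Suc_choose:
  fixes y :: "nat \<Rightarrow> 'a :: comm_ring_1"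
  shows "(\<Sum>t\<le>Suc k. (-1)^t * of_nat ((Suc k choose t) * (Suc k + t)) * y t)
       = of_nat (Suc k) * (\<Sum>t\<le>k. (-1)^t * of_nat (k choose t) * (y t - 2 * y (Suc t)))"
proof -
  have shift: "(\<Sum>t\<le>k. (-1)^Suc t * of_nat (k choose Suc t) * y (Suc t))
      = (\<Sum>t\<le>k. (-1)^t * of_nat (k choose t) * y t) - y 0"
    using sum.atMost_Suc_shift[of "\<lambda>t. (-1)^t * of_nat (k choose t) * y t" k]
    by (simp add: binomial_eq_0 sum_negf)
  have "(\<Sum>t\<le>Suc k. (-1)^t * of_nat ((Suc k choose t) * (Suc k + t)) * y t)
      = of_nat (Suc k) * y 0 + (\<Sum>t\<le>k. (-1)^Suc t * of_nat (Suc k) *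
          (of_nat (k choose Suc t) + 2 * of_nat (k choose t)) * y (Suc t))"
    by (simp only: sum.atMost_Suc_shift Suc_choose_Suc_times) (simp add: algebra_simps)
  also have "\<dots> = of_nat (Suc k) * (y 0 + (\<Sum>t\<le>k. (-1)^Suc t * of_nat (k choose Suc t) * y (Suc t))
      - 2 * (\<Sum>t\<le>k. (-1)^t * of_nat (k choose t) * y (Suc t)))"
    by (simp add: algebra_simps sum.distrib sum_distrib_left sum_subtractf)
  finally show ?thesis
    unfolding shift by (simp add: algebra_simps sum_subtractf sum_distrib_left)
qed

lemma power_diff_square_eq_sum:
  fixes x :: "'a :: comm_ring_1"
  shows "(x - x\<^sup>2) ^ n = (\<Sum>t\<le>n. (-1) ^ t * of_nat (n choose t) * x ^ (n + t))"
proof -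
  have "(x - x\<^sup>2) ^ n = x ^ n * (- x + 1) ^ n"
    by (simp add: power_mult_distrib[symmetric] power2_eq_square algebra_simps)
  also have "(- x + 1) ^ n = (\<Sum>t\<le>n. of_nat (n choose t) * (- x) ^ t * 1 ^ (n - t))"
    by (rule binomial_ring)
  finally show ?thesis
    by (simp add: sum_distrib_left power_add power_minus[of x] mult_ac)
qed

lemma diff_square_bounds:
  fixes x :: real
  assumes "0 \<le> x" and "x \<le> 1"
  shows "0 \<le> x - x\<^sup>2 \<and> x - x\<^sup>2 \<le> 1"
proof -
  have "0 \<le> x * x" "x * x \<le> x"
    using assms by (simp_all add: mult_left_le)
  with assms show ?thesis
    unfolding power2_eq_square by linarith
qed

lemma exp_minus_one_sums: "(\<lambda>k. x ^ Suc k / fact (Suc k)) sums (exp x - 1)"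
  for x :: real
proof -
  have "(\<lambda>k. x ^ k / fact k) sums exp x"
    using exp_converges[of x] by (simp add: divide_inverse mult.commute)
  then show ?thesis
    using sums_Suc_iff[of "\<lambda>k. x ^ k / fact k"] by simp
qed

lemma
  fixes M :: "'a measure" and P :: "'a \<Rightarrow> real"
  assumes P: "integrable M P" and P01: "AE x in M. 0 \<le> P x \<and> P x \<le> 1"
  shows integrable_exp_minus_one: "integrable M (\<lambda>x. exp (c * P x) - 1)"
    and integral_exp_minus_one_sums:
      "(\<lambda>k. c ^ Suc k / fact (Suc k) * (\<integral>x. P x ^ Suc k \<partial>M)) sums (\<integral>x. exp (c * P x) - 1 \<partial>M)"
proof -
  define f where "f k x = (c * P x) ^ Suc k / fact (Suc k)" for k x
  define B where "B k = \<bar>c\<bar> ^ Suc k / fact (Suc k)" for k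
  have [measurable]: "P \<in> borel_measurable M" using P by blast
  have B: "summable B"
    unfolding B_def using exp_minus_one_sums sums_summable by blast
  have f_le: "norm (f k x) \<le> B k * P x" if "0 \<le> P x" "P x \<le> 1" for k x
  proof -
    have "norm (f k x) = B k * P x ^ Suc k"
      using that by (simp add: f_def B_def abs_mult power_mult_distrib power_abs)
    also have "\<dots> \<le> B k * P x"
      using that by (intro mult_left_mono) (simp_all add: power_le_one mult_left_le B_def)
    finally show ?thesis .
  qed
  have f_int: "integrable M (f k)" for k
  proof (rule Bochner_Integration.integrable_bound[OF integrable_mult_right[OF P, of "B k"]])
    show "f k \<in> borel_measurable M" unfolding f_def by measurable
    show "AE x in M. norm (f k x) \<le> norm (B k * P x)"
      using P01 by eventually_elim (use f_le in \<open>auto simp: B_def\<close>)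
  qed
  have f_summable: "AE x in M. summable (\<lambda>k. norm (f k x))"
    using P01 by eventually_elim
      (rule summable_comparison_test[OF _ summable_mult2[OF B]], use f_le in auto)
  have "(\<integral>x. norm (f k x) \<partial>M) \<le> B k * (\<integral>x. P x \<partial>M)" for k
    using P01 f_le by (subst integral_mult_right_zero[symmetric], intro integral_mono_AE)
      (auto intro: integrable_norm f_int P)
  then have int_summable: "summable (\<lambda>k. \<integral>x. norm (f k x) \<partial>M)"
    by (intro summable_comparison_test[OF _ summable_mult2[OF B]]) auto
  have series: "(\<Sum>k. f k x) = exp (c * P x) - 1" for x
    unfolding f_def using exp_minus_one_sums sums_unique by (metis power_mult_distrib)
  show "integrable M (\<lambda>x. exp (c * P x) - 1)"
    using integrable_suminf[OF f_int f_summable int_summable] by (simp add: series)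
  have "(\<integral>x. f k x \<partial>M) = c ^ Suc k / fact (Suc k) * (\<integral>x. P x ^ Suc k \<partial>M)" for k
    by (simp add: f_def power_mult_distrib del: power_Suc)
  then show "(\<lambda>k. c ^ Suc k / fact (Suc k) * (\<integral>x. P x ^ Suc k \<partial>M)) sums (\<integral>x. exp (c * P x) - 1 \<partial>M)"
    using sums_integral[OF f_int f_summable int_summable] by (simp add: series)
qed

section \<open>Layer measures\<close>

definition layer_measure :: "real \<Rightarrow> real measure" where
  "layer_measure r = (if r = 0 then return borel 0
     else density lborel (\<lambda>a. ennreal (indicator {0..} a * (r * a powr (r - 1)))))"

lemma sets_layer_measure [measurable_cong, simp]: "sets (layer_measure r) = sets borel"
  by (simp add: layer_measure_def)

lemma space_layer_measure [simp]: "space (layer_measure r) = UNIV"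
  by (simp add: layer_measure_def)

lemma sigma_finite_layer_measure: "sigma_finite_measure (layer_measure r)"
proof (cases "r = 0")
  case True
  then show ?thesis
    by (simp add: layer_measure_def prob_space_imp_sigma_finite prob_space_return)
next
  case False
  have "sigma_finite_measure
      (density lborel (\<lambda>a. ennreal (indicator {0..} a * (r * a powr (r - 1)))))"
    by (subst sigma_finite_measure.sigma_finite_iff_density_finite[OF sigma_finite_lborel]) auto
  with False show ?thesis by (simp add: layer_measure_def)
qed

lemma AE_layer_measure_nonneg: "AE a in layer_measure r. 0 \<le> a"
  unfolding layer_measure_def
  by (auto simp: AE_return AE_density split: split_indicator intro!: AE_I2)

lemma nn_integral_layer_measure:
  assumes "r > 0" and [measurable]: "f \<in> borel_measurable borel"
  shows "(\<integral>\<^sup>+a. f a \<partial>layer_measure r)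
    = (\<integral>\<^sup>+a. ennreal (indicator {0..} a * (r * a powr (r - 1))) * f a \<partial>lborel)"
  using assms by (simp add: layer_measure_def nn_integral_density)

lemma emeasure_layer_measure_lessThan:
  assumes "x > 0" and "r \<ge> 0"
  shows "emeasure (layer_measure r) {..<x} = x powr r"
proof (cases "r = 0")
  case True
  then show ?thesis using \<open>x > 0\<close> by (simp add: layer_measure_def)
next
  case False
  with \<open>r \<ge> 0\<close> have r: "r > 0" by simp
  have integral: "((\<lambda>a. r * a powr (r - 1)) has_integral x powr r) {0..x}"
    using has_integral_mult_right[OF has_integral_powr_from_0[of "r - 1" x], of r] r \<open>x > 0\<close> by simp
  have "(\<integral>\<^sup>+a. ennreal (r * a powr (r - 1)) * indicator {0..x} a \<partial>lborel) = x powr r"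
    by (rule nn_integral_has_integral_lebesgue'[OF _ integral]) (use r in auto)
  moreover have "emeasure (layer_measure r) {..<x}
      = (\<integral>\<^sup>+a. ennreal (r * a powr (r - 1)) * indicator {0..x} a \<partial>lborel)"
    using r AE_lborel_singleton[of x]
    by (subst nn_integral_indicator[symmetric], simp, subst nn_integral_layer_measure)
       (auto intro!: nn_integral_cong_AE split: split_indicator elim!: eventually_mono)
  ultimately show ?thesis by simp
qed

lemma nn_integral_powr_layer_cake:
  fixes X :: "'a \<Rightarrow> real" and g :: "'a \<Rightarrow> ennreal"
  assumes M: "sigma_finite_measure M"
    and [measurable]: "X \<in> borel_measurable M" "g \<in> borel_measurable M"
    and X_pos: "AE \<omega> in M. X \<omega> > 0" and r: "r \<ge> 0"
  shows "(\<integral>\<^sup>+\<omega>. ennreal (X \<omega> powr r) * g \<omega> \<partial>M)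
    = (\<integral>\<^sup>+a. (\<integral>\<^sup>+\<omega>\<in>{\<omega> \<in> space M. a < X \<omega>}. g \<omega> \<partial>M) \<partial>layer_measure r)"
proof -
  interpret pair_sigma_finite M "layer_measure r"
    using M sigma_finite_layer_measure by (simp add: pair_sigma_finite_def)
  have "(\<integral>\<^sup>+\<omega>. ennreal (X \<omega> powr r) * g \<omega> \<partial>M)
      = (\<integral>\<^sup>+\<omega>. \<integral>\<^sup>+a. g \<omega> * indicator {..<X \<omega>} a \<partial>layer_measure r \<partial>M)"
    using X_pos
    by (intro nn_integral_cong_AE, eventually_elim)
      (simp add: nn_integral_cmult emeasure_layer_measure_lessThan r mult.commute)
  also have "\<dots> = (\<integral>\<^sup>+a. \<integral>\<^sup>+\<omega>. g \<omega> * indicator {..<X \<omega>} a \<partial>M \<partial>layer_measure r)"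
  proof (rule Fubini'[symmetric])
    have "Measurable.pred (M \<Otimes>\<^sub>M layer_measure r) (\<lambda>x. snd x < X (fst x))"
      by measurable
    then show "(\<lambda>(\<omega>, a). g \<omega> * indicator {..<X \<omega>} a) \<in> borel_measurable (M \<Otimes>\<^sub>M layer_measure r)"
      by (simp add: indicator_def split_beta')
  qed
  finally show ?thesis
    by (auto simp: indicator_def intro!: nn_integral_cong)
qed

lemma nn_integral_powr_mult_layer_cake:
  fixes X Y :: "'a \<Rightarrow> real"
  assumes M: "sigma_finite_measure M"
    and [measurable]: "X \<in> borel_measurable M" "Y \<in> borel_measurable M"
    and pos: "AE \<omega> in M. X \<omega> > 0 \<and> Y \<omega> > 0" and "r \<ge> 0" and "s \<ge> 0"
  shows "(\<integral>\<^sup>+\<omega>. ennreal (X \<omega> powr r * Y \<omega> powr s) \<partial>M)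
    = (\<integral>\<^sup>+a. \<integral>\<^sup>+b. emeasure M {\<omega> \<in> space M. a < X \<omega> \<and> b < Y \<omega>}
        \<partial>layer_measure s \<partial>layer_measure r)"
proof -
  have "(\<integral>\<^sup>+\<omega>. ennreal (X \<omega> powr r * Y \<omega> powr s) \<partial>M)
      = (\<integral>\<^sup>+a. (\<integral>\<^sup>+\<omega>\<in>{\<omega> \<in> space M. a < X \<omega>}. ennreal (Y \<omega> powr s) \<partial>M) \<partial>layer_measure r)"
    using nn_integral_powr_layer_cake[OF M, of X "\<lambda>\<omega>. ennreal (Y \<omega> powr s)" r] pos \<open>r \<ge> 0\<close>
    by (auto simp: ennreal_mult elim: AE_mp)
  also have "\<dots> = (\<integral>\<^sup>+a. \<integral>\<^sup>+b. emeasure M {\<omega> \<in> space M. a < X \<omega> \<and> b < Y \<omega>}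
      \<partial>layer_measure s \<partial>layer_measure r)"
  proof (intro nn_integral_cong)
    fix a
    have "(\<integral>\<^sup>+\<omega>\<in>{\<omega> \<in> space M. a < X \<omega>}. ennreal (Y \<omega> powr s) \<partial>M)
        = (\<integral>\<^sup>+b. (\<integral>\<^sup>+\<omega>\<in>{\<omega> \<in> space M. b < Y \<omega>}. indicator {\<omega> \<in> space M. a < X \<omega>} \<omega> \<partial>M)
            \<partial>layer_measure s)"
      using nn_integral_powr_layer_cake[OF M, of Y "indicator {\<omega> \<in> space M. a < X \<omega>}" s]
        pos \<open>s \<ge> 0\<close>
      by (auto elim: AE_mp)
    also have "\<dots> = (\<integral>\<^sup>+b. emeasure M {\<omega> \<in> space M. a < X \<omega> \<and> b < Y \<omega>} \<partial>layer_measure s)"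
    proof (intro nn_integral_cong)
      fix b
      have "(\<integral>\<^sup>+\<omega>\<in>{\<omega> \<in> space M. b < Y \<omega>}. indicator {\<omega> \<in> space M. a < X \<omega>} \<omega> \<partial>M)
          = (\<integral>\<^sup>+\<omega>. indicator {\<omega> \<in> space M. a < X \<omega> \<and> b < Y \<omega>} \<omega> \<partial>M)"
        by (intro nn_integral_cong) (simp split: split_indicator)
      also have "\<dots> = emeasure M {\<omega> \<in> space M. a < X \<omega> \<and> b < Y \<omega>}"
        by (rule nn_integral_indicator) measurable
      finally show "(\<integral>\<^sup>+\<omega>\<in>{\<omega> \<in> space M. b < Y \<omega>}. indicator {\<omega> \<in> space M. a < X \<omega>} \<omega> \<partial>M)
          = emeasure M {\<omega> \<in> space M. a < X \<omega> \<and> b < Y \<omega>}" .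
    qed
    finally show "(\<integral>\<^sup>+\<omega>\<in>{\<omega> \<in> space M. a < X \<omega>}. ennreal (Y \<omega> powr s) \<partial>M)
        = (\<integral>\<^sup>+b. emeasure M {\<omega> \<in> space M. a < X \<omega> \<and> b < Y \<omega>} \<partial>layer_measure s)" .
  qed
  finally show ?thesis .
qed

section \<open>Gaussian moments\<close>

lemma powr_substitution_square:
  fixes c x p :: real assumes c: "c > 0" and x: "x > 0"
  shows "c powr (-p) * (c * x\<^sup>2) powr (p - 1) * (c * x) = x powr (2 * p - 1)"
proof -
  have "(x\<^sup>2) powr (p - 1) = (x powr 2) powr (p - 1)"
    using x by simp
  also have "\<dots> = x powr (2 * p - 2)"
    by (simp add: powr_powr algebra_simps)
  finally have "c powr (-p) * (c * x\<^sup>2) powr (p - 1) * (c * x)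
      = (c powr (-p) * c powr (p - 1) * c) * (x powr (2 * p - 2) * x)"
    using c x by (simp add: powr_mult ac_simps)
  also have "c powr (-p) * c powr (p - 1) * c = 1"
    using c by (simp flip: powr_add add: powr_diff)
  also have "x powr (2 * p - 2) * x = x powr (2 * p - 1)"
    using x by (simp add: powr_diff power2_eq_square)
  finally show ?thesis by simp
qed

lemma gamma_density_substitution_square:
  fixes c r x :: real
  assumes c: "c > 0" and x: "x \<ge> 0"
  shows "r / 2 * c powr (- (r / 2)) * ((c * x\<^sup>2) powr (r / 2 - 1) / exp (c * x\<^sup>2)) * (2 * c * x)
    = r * x powr (r - 1) * exp (- c * x\<^sup>2)"
proof (cases "x = 0")
  case False
  with x have "x > 0" by simp
  have "r / 2 * c powr (- (r / 2)) * ((c * x\<^sup>2) powr (r / 2 - 1) / exp (c * x\<^sup>2)) * (2 * c * x)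
      = r * (c powr (- (r / 2)) * (c * x\<^sup>2) powr (r / 2 - 1) * (c * x)) / exp (c * x\<^sup>2)"
    by simp
  also have "\<dots> = r * x powr (r - 1) * exp (- c * x\<^sup>2)"
    using powr_substitution_square[OF c \<open>x > 0\<close>, of "r / 2"] by (simp add: exp_minus field_simps)
  finally show ?thesis .
qed simp

lemma nn_integral_atLeast_LIMSEQ:
  fixes f :: "real \<Rightarrow> ennreal"
  assumes "f \<in> borel_measurable borel" "incseq b" "filterlim b at_top sequentially"
  shows "(\<lambda>n. \<integral>\<^sup>+x. f x * indicator {a..b n} x \<partial>lborel) \<longlonglongrightarrow> (\<integral>\<^sup>+x. f x * indicator {a..} x \<partial>lborel)"
proof (rule nn_integral_LIMSEQ)
  show "incseq (\<lambda>n x. f x * indicator {a..b n} x)"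
    using \<open>incseq b\<close>
    by (auto simp: incseq_def le_fun_def split: split_indicator) (meson order_trans)
  show "(\<lambda>n. f x * indicator {a..b n} x) \<longlonglongrightarrow> f x * indicator {a..} x" for x
  proof (rule tendsto_eventually)
    have "eventually (\<lambda>n. x \<le> b n) sequentially"
      using assms(3) by (simp add: filterlim_at_top)
    then show "eventually (\<lambda>n. f x * indicator {a..b n} x = f x * indicator {a..} x) sequentially"
      by eventually_elim (auto split: split_indicator)
  qed
qed (use assms in auto)

lemma nn_integral_powr_exp_square:
  fixes c r :: real
  assumes c: "c > 0" and r: "r > 0"
  shows "(\<integral>\<^sup>+x. ennreal (r * x powr (r - 1) * exp (- c * x\<^sup>2)) * indicator {0..} x \<partial>lborel)
    = ennreal (c powr (- r / 2) * Gamma (1 + r / 2))"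
proof -
  define p where "p = r / 2"
  define F where "F t = p * c powr (- p) * (t powr (p - 1) / exp t)" for t
  define G where "G x = r * x powr (r - 1) * exp (- c * x\<^sup>2)" for x
  have p: "p > 0" using r by (simp add: p_def)
  have FG: "F (c * x\<^sup>2) * (2 * c * x) = G x" if "x \<ge> 0" for x
    unfolding F_def G_def p_def using gamma_density_substitution_square[OF c that] .
  have substitution: "(\<integral>\<^sup>+t. ennreal (F t) * indicator {0..c * b\<^sup>2} t \<partial>lborel)
      = (\<integral>\<^sup>+x. ennreal (G x) * indicator {0..b} x \<partial>lborel)" if "b \<ge> 0" for b
  proof -
    have "(\<integral>\<^sup>+t. ennreal (F t * indicator {(\<lambda>x. c * x\<^sup>2) 0..(\<lambda>x. c * x\<^sup>2) b} t) \<partial>lborel)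
        = (\<integral>\<^sup>+x. ennreal (F (c * x\<^sup>2) * (2 * c * x) * indicator {0..b} x) \<partial>lborel)"
      by (rule nn_integral_substitution)
        (use c that in \<open>auto simp: set_borel_measurable_def F_def intro!: derivative_eq_intros continuous_intros\<close>)
    also have "\<dots> = (\<integral>\<^sup>+x. ennreal (G x * indicator {0..b} x) \<partial>lborel)"
      by (intro nn_integral_cong) (simp add: FG split: split_indicator)
    finally show ?thesis by (simp add: nn_integral_set_ennreal)
  qed
  have F_lim: "(\<lambda>n. \<integral>\<^sup>+t. ennreal (F t) * indicator {0..c * (real n)\<^sup>2} t \<partial>lborel)
      \<longlonglongrightarrow> (\<integral>\<^sup>+t. ennreal (F t) * indicator {0..} t \<partial>lborel)"
    using c by (intro nn_integral_atLeast_LIMSEQ)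
      (auto simp: F_def incseq_def intro!: mult_left_mono power_mono, real_asymp)
  have G_lim: "(\<lambda>n. \<integral>\<^sup>+t. ennreal (F t) * indicator {0..c * (real n)\<^sup>2} t \<partial>lborel)
      \<longlonglongrightarrow> (\<integral>\<^sup>+x. ennreal (G x) * indicator {0..} x \<partial>lborel)"
    unfolding substitution[OF of_nat_0_le_iff]
    by (intro nn_integral_atLeast_LIMSEQ)
      (auto simp: G_def incseq_def filterlim_real_sequentially)
  have "(\<integral>\<^sup>+x. ennreal (G x) * indicator {0..} x \<partial>lborel)
      = (\<integral>\<^sup>+t. ennreal (F t) * indicator {0..} t \<partial>lborel)"
    using LIMSEQ_unique[OF G_lim F_lim] .
  also have "\<dots> = (\<integral>\<^sup>+t. ennreal (p * c powr (- p)) * ennreal (indicator {0..} t * t powr (p - 1) / exp t) \<partial>lborel)"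
    using p c by (intro nn_integral_cong) (auto simp: F_def ennreal_mult[symmetric] split: split_indicator)
  also have "\<dots> = ennreal (c powr (- p) * (p * Gamma p))"
    using p c by (simp add: nn_integral_cmult Gamma_conv_nn_integral_real ennreal_mult' mult_ac)
  also have "p * Gamma p = Gamma (1 + r / 2)"
    using Gamma_plus1[of p] nonpos_Ints_nonpos[of p] p by (force simp: p_def add.commute)
  finally show ?thesis by (simp add: G_def p_def mult_ac)
qed

lemma has_bochner_integral_layer_measure_exp_square:
  assumes c: "c > 0" and r: "r \<ge> 0"
  shows "has_bochner_integral (layer_measure r) (\<lambda>a. exp (- c * a\<^sup>2))
    (c powr (- r / 2) * Gamma (1 + r / 2))"
proof (rule has_bochner_integral_nn_integral)
  show "0 \<le> c powr (- r / 2) * Gamma (1 + r / 2)"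
    using r by (simp add: Gamma_real_pos less_imp_le)
  show "(\<integral>\<^sup>+a. ennreal (exp (- c * a\<^sup>2)) \<partial>layer_measure r)
      = ennreal (c powr (- r / 2) * Gamma (1 + r / 2))"
  proof (cases "r = 0")
    case False
    with r have "r > 0" by simp
    have "(\<integral>\<^sup>+a. ennreal (exp (- c * a\<^sup>2)) \<partial>layer_measure r)
        = (\<integral>\<^sup>+a. ennreal (indicator {0..} a * (r * a powr (r - 1))) * ennreal (exp (- c * a\<^sup>2)) \<partial>lborel)"
      using \<open>r > 0\<close> by (rule nn_integral_layer_measure) simp
    also have "\<dots> = (\<integral>\<^sup>+a. ennreal (r * a powr (r - 1) * exp (- c * a\<^sup>2)) * indicator {0..} a \<partial>lborel)"
      using \<open>r > 0\<close>
      by (intro nn_integral_cong) (simp add: ennreal_mult[symmetric] split: split_indicator)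
    finally show ?thesis
      using nn_integral_powr_exp_square[OF c \<open>r > 0\<close>] by simp
  qed (use c in \<open>simp add: layer_measure_def nn_integral_return\<close>)
qed auto

section \<open>Rayleigh marginals and the coefficients S_m\<close>

definition rayleigh_ccdf :: "real \<Rightarrow> real \<Rightarrow> real" where
  "rayleigh_ccdf l x = exp (- x\<^sup>2 / (2 * l\<^sup>2))"

lemma rayleigh_ccdf_0 [simp]: "rayleigh_ccdf l 0 = 1"
  by (simp add: rayleigh_ccdf_def)

lemma rayleigh_ccdf_pos: "0 < rayleigh_ccdf l x"
  by (simp add: rayleigh_ccdf_def)

lemma rayleigh_ccdf_le_one: "rayleigh_ccdf l x \<le> 1"
  by (simp add: rayleigh_ccdf_def divide_nonpos_nonneg)

lemma rayleigh_ccdf_square: "(rayleigh_ccdf l x)\<^sup>2 = exp (- x\<^sup>2 / l\<^sup>2)"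
  by (simp add: rayleigh_ccdf_def power2_eq_square field_simps flip: exp_add)

lemma rayleigh_ccdf_power: "rayleigh_ccdf l x ^ n = exp (- (n / (2 * l\<^sup>2)) * x\<^sup>2)"
  by (simp add: rayleigh_ccdf_def flip: exp_of_nat_mult)

lemma tendsto_rayleigh_ccdf: "l > 0 \<Longrightarrow> (rayleigh_ccdf l \<longlongrightarrow> 0) at_top"
  unfolding rayleigh_ccdf_def by real_asymp

definition rayleigh_moment :: "real \<Rightarrow> real \<Rightarrow> real" where
  "rayleigh_moment l r = l powr r * 2 powr (r / 2) * Gamma (1 + r / 2)"

lemma rayleigh_moment_pos: "l > 0 \<Longrightarrow> r \<ge> 0 \<Longrightarrow> rayleigh_moment l r > 0"
  by (simp add: rayleigh_moment_def Gamma_real_pos)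

lemma has_bochner_integral_rayleigh_ccdf_power:
  assumes l: "l > 0" and r: "r \<ge> 0" and n: "n > 0"
  shows "has_bochner_integral (layer_measure r) (\<lambda>a. rayleigh_ccdf l a ^ n)
    (rayleigh_moment l r * real n powr (- r / 2))"
proof -
  have "(n / (2 * l\<^sup>2)) powr (- r / 2) = n powr (- r / 2) / (2 * l\<^sup>2) powr (- (r / 2))"
    using l n by (simp only: powr_divide minus_divide_left)
  also have "\<dots> = n powr (- r / 2) * (2 * l\<^sup>2) powr (r / 2)"
    by (simp only: powr_minus divide_inverse inverse_inverse_eq)
  also have "(2 * l\<^sup>2) powr (r / 2) = 2 powr (r / 2) * (l powr 2) powr (r / 2)"
    using l by (simp add: powr_mult)
  also have "(l powr 2) powr (r / 2) = l powr r"
    by (simp add: powr_powr)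
  finally have "(n / (2 * l\<^sup>2)) powr (- r / 2) = l powr r * 2 powr (r / 2) * n powr (- r / 2)"
    by (simp only: mult_ac)
  then show ?thesis
    unfolding rayleigh_ccdf_power rayleigh_moment_def
    using has_bochner_integral_layer_measure_exp_square[of "n / (2 * l\<^sup>2)" r] l r n
    by (simp add: mult_ac)
qed

lemma has_bochner_integral_rayleigh_ccdf_diff_square_power:
  assumes "l > 0" and "r \<ge> 0" and "n > 0"
  shows "has_bochner_integral (layer_measure r)
    (\<lambda>a. (rayleigh_ccdf l a - (rayleigh_ccdf l a)\<^sup>2) ^ n)
    (rayleigh_moment l r * (\<Sum>t\<le>n. (-1) ^ t * real (n choose t) * real (n + t) powr (- r / 2)))"
  unfolding power_diff_square_eq_sum sum_distrib_left
proof (intro has_bochner_integral_sum)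
  fix t
  have "has_bochner_integral (layer_measure r) (\<lambda>a. rayleigh_ccdf l a ^ (n + t))
      (rayleigh_moment l r * real (n + t) powr (- r / 2))"
    using assms by (intro has_bochner_integral_rayleigh_ccdf_power) simp_all
  from has_bochner_integral_mult_right[OF this, of "(-1) ^ t * real (n choose t)"]
  show "has_bochner_integral (layer_measure r)
      (\<lambda>a. (-1) ^ t * real (n choose t) * rayleigh_ccdf l a ^ (n + t))
      (rayleigh_moment l r * ((-1) ^ t * real (n choose t) * real (n + t) powr (- r / 2)))"
    by (simp add: mult_ac)
qed

definition S_summand :: "real \<Rightarrow> real \<Rightarrow> nat \<Rightarrow> real" where
  "S_summand \<alpha> m k = \<alpha> ^ k / fact k *
     (\<Sum>t = 0..k. (-1) ^ t * real (k choose t) *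
        (2 * (real (k + t + 2)) powr (- (m + 2) / 2) - (real (k + t + 1)) powr (- (m + 2) / 2)))"

lemma S_coef_eq_suminf: "S_coef \<alpha> m = (\<Sum>k. S_summand \<alpha> m k)"
  unfolding S_coef_def S_summand_def ..

lemma alternating_sum_eq_S_summand:
  "\<alpha> ^ Suc k / fact (Suc k) *
     (\<Sum>t\<le>Suc k. (-1) ^ t * real (Suc k choose t) * real (Suc k + t) powr (- m / 2))
   = - \<alpha> * S_summand \<alpha> m k"
proof -
  define Q where "Q = (\<Sum>t = 0..k. (-1) ^ t * real (k choose t) *
    (2 * real (k + t + 2) powr (- (m + 2) / 2) - real (k + t + 1) powr (- (m + 2) / 2)))"
  define y where "y t = real (Suc k + t) powr (- (m + 2) / 2)" for t
  have "real (Suc k + t) powr (- m / 2) = real (Suc k + t) powr (1 + (- (m + 2) / 2))" for t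
    by (simp add: field_simps)
  then have split: "real (Suc k + t) powr (- m / 2) = real (Suc k + t) * y t" for t
    unfolding y_def powr_add by simp
  have "(\<Sum>t\<le>Suc k. (-1) ^ t * real (Suc k choose t) * real (Suc k + t) powr (- m / 2))
      = (\<Sum>t\<le>Suc k. (-1) ^ t * of_nat ((Suc k choose t) * (Suc k + t)) * y t)"
    unfolding split of_nat_mult by (simp only: mult.assoc)
  also have "\<dots> = real (Suc k) * (\<Sum>t\<le>k. (-1) ^ t * real (k choose t) * (y t - 2 * y (Suc t)))"
    by (rule alternating_sum_Suc_choose)
  also have "(\<Sum>t\<le>k. (-1) ^ t * real (k choose t) * (y t - 2 * y (Suc t))) = - Q"
    by (simp add: Q_def y_def atMost_atLeast0 sum_negf[symmetric] algebra_simps)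
  finally have sum_eq: "(\<Sum>t\<le>Suc k. (-1) ^ t * real (Suc k choose t) * real (Suc k + t) powr (- m / 2))
      = real (Suc k) * - Q" .
  have "\<alpha> ^ Suc k / fact (Suc k) * real (Suc k) = \<alpha> * (\<alpha> ^ k / fact k)"
    by (simp add: field_simps del: of_nat_Suc)
  moreover have "S_summand \<alpha> m k = \<alpha> ^ k / fact k * Q"
    unfolding S_summand_def Q_def ..
  ultimately show ?thesis
    unfolding sum_eq by (metis mult.assoc mult_minus_left mult_minus_right)
qed

lemma integral_rayleigh_ccdf_diff_square_Suc_power:
  assumes "l > 0" and "r \<ge> 0"
  shows "\<alpha> ^ Suc k / fact (Suc k) *
      (\<integral>a. (rayleigh_ccdf l a - (rayleigh_ccdf l a)\<^sup>2) ^ Suc k \<partial>layer_measure r)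
    = - \<alpha> * rayleigh_moment l r * S_summand \<alpha> r k"
proof -
  have "(\<integral>a. (rayleigh_ccdf l a - (rayleigh_ccdf l a)\<^sup>2) ^ Suc k \<partial>layer_measure r)
      = rayleigh_moment l r *
        (\<Sum>t\<le>Suc k. (-1) ^ t * real (Suc k choose t) * real (Suc k + t) powr (- r / 2))"
    using assms
    by (intro has_bochner_integral_integral_eq has_bochner_integral_rayleigh_ccdf_diff_square_power) simp_all
  then have "\<alpha> ^ Suc k / fact (Suc k) *
      (\<integral>a. (rayleigh_ccdf l a - (rayleigh_ccdf l a)\<^sup>2) ^ Suc k \<partial>layer_measure r)
    = rayleigh_moment l r * (\<alpha> ^ Suc k / fact (Suc k) *
        (\<Sum>t\<le>Suc k. (-1) ^ t * real (Suc k choose t) * real (Suc k + t) powr (- r / 2)))"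
    by (simp only: mult.left_commute)
  also have "\<dots> = rayleigh_moment l r * (- \<alpha> * S_summand \<alpha> r k)"
    by (simp only: alternating_sum_eq_S_summand)
  finally show ?thesis by (simp add: mult_ac)
qed

definition rayleigh_perturbation :: "real \<Rightarrow> real \<Rightarrow> real \<Rightarrow> real" where
  "rayleigh_perturbation \<alpha> l x = 1 - exp (\<alpha> * (rayleigh_ccdf l x - (rayleigh_ccdf l x)\<^sup>2))"

lemma rayleigh_perturbation_0 [simp]: "rayleigh_perturbation \<alpha> l 0 = 0"
  by (simp add: rayleigh_perturbation_def)

lemma tendsto_rayleigh_perturbation:
  assumes "l > 0"
  shows "(rayleigh_perturbation \<alpha> l \<longlongrightarrow> 0) at_top"
proof -
  have "((\<lambda>x. 1 - exp (\<alpha> * (rayleigh_ccdf l x - (rayleigh_ccdf l x)\<^sup>2)))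
      \<longlongrightarrow> 1 - exp (\<alpha> * (0 - 0\<^sup>2))) at_top"
    using tendsto_rayleigh_ccdf[OF assms] by (intro tendsto_intros)
  then show ?thesis
    by (simp add: rayleigh_perturbation_def[abs_def])
qed

lemma has_bochner_integral_rayleigh_perturbation:
  assumes l: "l > 0" and r: "r \<ge> 0"
  shows "has_bochner_integral (layer_measure r) (rayleigh_perturbation \<alpha> l)
    (rayleigh_moment l r * \<alpha> * S_coef \<alpha> r)"
proof (cases "\<alpha> = 0")
  case True
  then have "rayleigh_perturbation \<alpha> l = (\<lambda>_. 0)"
    by (simp add: fun_eq_iff rayleigh_perturbation_def)
  with True show ?thesis by (simp add: has_bochner_integral_zero)
next
  case False
  define P where "P a = rayleigh_ccdf l a - (rayleigh_ccdf l a)\<^sup>2" for a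
  define I where "I = (\<integral>a. exp (\<alpha> * P a) - 1 \<partial>layer_measure r)"
  define C where "C = - \<alpha> * rayleigh_moment l r"
  have P: "integrable (layer_measure r) P"
    unfolding P_def using has_bochner_integral_rayleigh_ccdf_diff_square_power[OF l r, of 1]
    by (simp add: has_bochner_integral_iff)
  have P01: "AE a in layer_measure r. 0 \<le> P a \<and> P a \<le> 1"
    unfolding P_def
    by (intro AE_I2 diff_square_bounds) (simp_all add: rayleigh_ccdf_pos less_imp_le rayleigh_ccdf_le_one)
  have C: "C \<noteq> 0"
    using False rayleigh_moment_pos[OF l r] by (simp add: C_def)
  have "(\<lambda>k. C * S_summand \<alpha> r k) sums I"
    using integral_exp_minus_one_sums[OF P P01, of \<alpha>]
    unfolding I_def P_def C_def integral_rayleigh_ccdf_diff_square_Suc_power[OF l r] .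
  from sums_mult_D[OF this C] have "S_coef \<alpha> r = I / C"
    unfolding S_coef_eq_suminf by (simp add: sums_unique[symmetric])
  with C have "I = - (rayleigh_moment l r * \<alpha> * S_coef \<alpha> r)"
    by (simp add: C_def)
  moreover have "has_bochner_integral (layer_measure r) (\<lambda>a. exp (\<alpha> * P a) - 1) I"
    using integrable_exp_minus_one[OF P P01] by (simp add: has_bochner_integral_iff I_def)
  moreover have "rayleigh_perturbation \<alpha> l = (\<lambda>a. - (exp (\<alpha> * P a) - 1))"
    by (simp add: fun_eq_iff rayleigh_perturbation_def P_def)
  ultimately show ?thesis
    using has_bochner_integral_minus by fastforce
qed

lemma F_joint_eq_rayleigh:
  "F_joint l1 l2 \<alpha> \<delta> x y = (1 - rayleigh_ccdf l1 x) * (1 - rayleigh_ccdf l2 y)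
     + \<delta> * rayleigh_perturbation \<alpha> l1 x * rayleigh_perturbation \<alpha> l2 y"
  by (simp add: F_joint_def rayleigh_perturbation_def rayleigh_ccdf_square)
    (simp add: rayleigh_ccdf_def)

section \<open>Moments from the survival function\<close>

lemma nn_integral_eq_has_bochner_integral:
  assumes "has_bochner_integral N f x" and "AE y in N. 0 \<le> f y"
  shows "(\<integral>\<^sup>+y. ennreal (f y) \<partial>N) = ennreal x" and "0 \<le> x"
  using assms by (auto simp: has_bochner_integral_iff nn_integral_eq_integral integral_nonneg_AE)

lemma has_bochner_integral_powr_mult_of_survival:
  fixes M :: "'a measure" and X Y :: "'a \<Rightarrow> real" and U1 U2 V1 V2 :: "real \<Rightarrow> real"
  assumes "prob_space M"
    and [measurable]: "X \<in> borel_measurable M" "Y \<in> borel_measurable M"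
    and pos: "AE \<omega> in M. X \<omega> > 0 \<and> Y \<omega> > 0" and r: "r \<ge> 0" and s: "s \<ge> 0"
    and surv: "\<And>a b. a \<ge> 0 \<Longrightarrow> b \<ge> 0 \<Longrightarrow>
      measure M {\<omega> \<in> space M. a < X \<omega> \<and> b < Y \<omega>} = U1 a * U2 b + \<delta> * V1 a * V2 b"
    and U1: "has_bochner_integral (layer_measure r) U1 u1"
    and V1: "has_bochner_integral (layer_measure r) V1 v1"
    and U2: "has_bochner_integral (layer_measure s) U2 u2"
    and V2: "has_bochner_integral (layer_measure s) V2 v2"
  shows "has_bochner_integral M (\<lambda>\<omega>. X \<omega> powr r * Y \<omega> powr s) (u1 * u2 + \<delta> * v1 * v2)"
proof -
  interpret prob_space M by fact
  define G where "G a = U1 a * u2 + \<delta> * V1 a * v2" for a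
  have inner: "(\<integral>\<^sup>+b. emeasure M {\<omega> \<in> space M. a < X \<omega> \<and> b < Y \<omega>} \<partial>layer_measure s)
      = ennreal (G a) \<and> 0 \<le> G a" if "a \<ge> 0" for a
  proof -
    have hb: "has_bochner_integral (layer_measure s) (\<lambda>b. U1 a * U2 b + \<delta> * V1 a * V2 b) (G a)"
      unfolding G_def using U2 V2
      by (intro has_bochner_integral_add has_bochner_integral_mult_right) (simp_all add: mult.assoc)
    have nonneg: "AE b in layer_measure s. 0 \<le> U1 a * U2 b + \<delta> * V1 a * V2 b"
      using AE_layer_measure_nonneg by eventually_elim (metis surv that measure_nonneg)
    have "(\<integral>\<^sup>+b. emeasure M {\<omega> \<in> space M. a < X \<omega> \<and> b < Y \<omega>} \<partial>layer_measure s)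
        = (\<integral>\<^sup>+b. ennreal (U1 a * U2 b + \<delta> * V1 a * V2 b) \<partial>layer_measure s)"
      using AE_layer_measure_nonneg
      by (intro nn_integral_cong_AE, eventually_elim) (simp add: emeasure_eq_measure surv that)
    with nn_integral_eq_has_bochner_integral[OF hb nonneg] show ?thesis
      by simp
  qed
  have G: "has_bochner_integral (layer_measure r) G (u1 * u2 + \<delta> * v1 * v2)"
    unfolding G_def using U1 V1
    by (intro has_bochner_integral_add has_bochner_integral_mult_left has_bochner_integral_mult_right)
      (simp_all add: mult_ac)
  have G_nonneg: "AE a in layer_measure r. 0 \<le> G a"
    using AE_layer_measure_nonneg by eventually_elim (use inner in blast)
  have "(\<integral>\<^sup>+\<omega>. ennreal (X \<omega> powr r * Y \<omega> powr s) \<partial>M) = (\<integral>\<^sup>+a. ennreal (G a) \<partial>layer_measure r)"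
    unfolding nn_integral_powr_mult_layer_cake[OF sigma_finite_measure_axioms assms(2,3) pos r s]
    using AE_layer_measure_nonneg by (intro nn_integral_cong_AE, eventually_elim) (use inner in blast)
  also have "\<dots> = ennreal (u1 * u2 + \<delta> * v1 * v2)"
    using nn_integral_eq_has_bochner_integral(1)[OF G G_nonneg] .
  finally show ?thesis
    by (intro has_bochner_integral_nn_integral nn_integral_eq_has_bochner_integral(2)[OF G G_nonneg])
      simp_all
qed

lemma prob_gt_gt_eq:
  fixes X Y :: "'a \<Rightarrow> real"
  assumes "prob_space M" and [measurable]: "X \<in> borel_measurable M" "Y \<in> borel_measurable M"
  shows "measure M {\<omega> \<in> space M. a < X \<omega> \<and> b < Y \<omega>}
    = 1 - measure M {\<omega> \<in> space M. X \<omega> \<le> a} - measure M {\<omega> \<in> space M. Y \<omega> \<le> b}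
      + measure M {\<omega> \<in> space M. X \<omega> \<le> a \<and> Y \<omega> \<le> b}"
proof -
  interpret prob_space M by fact
  define A where "A = {\<omega> \<in> space M. X \<omega> \<le> a}"
  define B where "B = {\<omega> \<in> space M. Y \<omega> \<le> b}"
  have [measurable]: "A \<in> sets M" "B \<in> sets M" unfolding A_def B_def by measurable
  have "{\<omega> \<in> space M. a < X \<omega> \<and> b < Y \<omega>} = space M - (A \<union> B)"
    unfolding A_def B_def by auto
  moreover have "measure M (A \<union> B) = measure M A + measure M B - measure M (A \<inter> B)"
    using finite_measure_Diff'[of B A] finite_measure_Union'[of A "B - A"] by (simp add: Int_commute)
  moreover have "A \<inter> B = {\<omega> \<in> space M. X \<omega> \<le> a \<and> Y \<omega> \<le> b}"
    unfolding A_def B_def by auto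
  ultimately show ?thesis
    using prob_compl[of "A \<union> B"] by (simp add: A_def B_def)
qed

lemma measure_le_le_LIMSEQ:
  fixes X Y :: "'a \<Rightarrow> real"
  assumes "finite_measure M" and [measurable]: "X \<in> borel_measurable M" "Y \<in> borel_measurable M"
  shows "(\<lambda>n. measure M {\<omega> \<in> space M. X \<omega> \<le> x \<and> Y \<omega> \<le> real n})
    \<longlonglongrightarrow> measure M {\<omega> \<in> space M. X \<omega> \<le> x}"
proof -
  interpret finite_measure M by fact
  have [measurable]: "{\<omega> \<in> space M. X \<omega> \<le> x \<and> Y \<omega> \<le> real n} \<in> sets M" for n
    by measurable
  have "(\<Union>n. {\<omega> \<in> space M. X \<omega> \<le> x \<and> Y \<omega> \<le> real n}) = {\<omega> \<in> space M. X \<omega> \<le> x}"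
    using real_arch_simple by blast
  moreover have "(\<lambda>n. measure M {\<omega> \<in> space M. X \<omega> \<le> x \<and> Y \<omega> \<le> real n})
      \<longlonglongrightarrow> measure M (\<Union>n. {\<omega> \<in> space M. X \<omega> \<le> x \<and> Y \<omega> \<le> real n})"
    by (rule finite_Lim_measure_incseq) (auto simp: incseq_def)
  ultimately show ?thesis by simp
qed

lemma survival_of_joint_cdf:
  fixes X Y :: "'a \<Rightarrow> real" and U1 U2 V1 V2 :: "real \<Rightarrow> real"
  assumes M: "prob_space M"
    and X[measurable]: "X \<in> borel_measurable M" and Y[measurable]: "Y \<in> borel_measurable M"
    and pos: "AE \<omega> in M. X \<omega> > 0 \<and> Y \<omega> > 0"
    and cdf: "\<And>x y. x > 0 \<Longrightarrow> y > 0 \<Longrightarrow>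
      measure M {\<omega> \<in> space M. X \<omega> \<le> x \<and> Y \<omega> \<le> y} = (1 - U1 x) * (1 - U2 y) + \<delta> * V1 x * V2 y"
    and lim: "(U1 \<longlongrightarrow> 0) at_top" "(U2 \<longlongrightarrow> 0) at_top" "(V1 \<longlongrightarrow> 0) at_top" "(V2 \<longlongrightarrow> 0) at_top"
    and at_0: "U1 0 = 1" "U2 0 = 1" "V1 0 = 0" "V2 0 = 0"
    and "a \<ge> 0" "b \<ge> 0"
  shows "measure M {\<omega> \<in> space M. a < X \<omega> \<and> b < Y \<omega>} = U1 a * U2 b + \<delta> * V1 a * V2 b"
proof -
  interpret prob_space M by fact
  have cdf': "measure M {\<omega> \<in> space M. X \<omega> \<le> x \<and> Y \<omega> \<le> y} = (1 - U1 x) * (1 - U2 y) + \<delta> * V1 x * V2 y"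
    if "x \<ge> 0" "y \<ge> 0" for x y
  proof (cases "x = 0 \<or> y = 0")
    case True
    have "AE \<omega> in M. \<not> (X \<omega> \<le> x \<and> Y \<omega> \<le> y)"
      using pos by eventually_elim (use True in auto)
    with True show ?thesis by (auto simp: prob_eq_0_AE at_0)
  qed (use that cdf in auto)
  have seq: "(\<lambda>n. f (real n)) \<longlonglongrightarrow> 0" if "(f \<longlongrightarrow> 0) at_top" for f :: "real \<Rightarrow> real"
    using filterlim_compose[OF that filterlim_real_sequentially] .
  have "(\<lambda>n. measure M {\<omega> \<in> space M. X \<omega> \<le> a \<and> Y \<omega> \<le> real n})
      \<longlonglongrightarrow> (1 - U1 a) * (1 - 0) + \<delta> * V1 a * 0"
    using cdf'[OF \<open>a \<ge> 0\<close>] by (simp only: of_nat_0_le_iff) (intro tendsto_intros seq lim)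
  from LIMSEQ_unique[OF measure_le_le_LIMSEQ[OF finite_measure_axioms] this]
  have X_cdf: "measure M {\<omega> \<in> space M. X \<omega> \<le> a} = 1 - U1 a"
    by simp
  have "(\<lambda>n. measure M {\<omega> \<in> space M. Y \<omega> \<le> b \<and> X \<omega> \<le> real n})
      \<longlonglongrightarrow> (1 - 0) * (1 - U2 b) + \<delta> * 0 * V2 b"
    unfolding conj_commute[of "Y _ \<le> b"]
    using cdf'[OF _ \<open>b \<ge> 0\<close>] by (simp only: of_nat_0_le_iff) (intro tendsto_intros seq lim)
  from LIMSEQ_unique[OF measure_le_le_LIMSEQ[OF finite_measure_axioms] this]
  have Y_cdf: "measure M {\<omega> \<in> space M. Y \<omega> \<le> b} = 1 - U2 b"
    by simp
  show ?thesis
    unfolding prob_gt_gt_eq[OF M X Y] X_cdf Y_cdf cdf'[OF \<open>a \<ge> 0\<close> \<open>b \<ge> 0\<close>]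
    by (simp add: algebra_simps)
qed

theorem proposition6:
  fixes M :: "'a measure" and X Y :: "'a \<Rightarrow> real"
    and l1 l2 \<alpha> \<delta> r s :: real
  assumes "prob_space M"
    and "l1 > 0" and "l2 > 0" and "\<alpha> \<noteq> 0"
    and "\<bar>\<delta>\<bar> \<le> delta_star \<alpha>"
    and "X \<in> borel_measurable M" and "Y \<in> borel_measurable M"
    and "AE \<omega> in M. X \<omega> > 0 \<and> Y \<omega> > 0"
    and "\<And>x y. x > 0 \<Longrightarrow> y > 0 \<Longrightarrow>
           measure M {\<omega> \<in> space M. X \<omega> \<le> x \<and> Y \<omega> \<le> y} = F_joint l1 l2 \<alpha> \<delta> x y"
    and "r \<ge> 0" and "s \<ge> 0"
  shows "integrable M (\<lambda>\<omega>. X \<omega> powr r * Y \<omega> powr s) \<and>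
         (\<integral>\<omega>. X \<omega> powr r * Y \<omega> powr s \<partial>M) =
           l1 powr r * l2 powr s * 2 powr ((r + s) / 2) * Gamma (1 + r / 2) * Gamma (1 + s / 2)
           * (1 + \<delta> * \<alpha>\<^sup>2 * S_coef \<alpha> r * S_coef \<alpha> s)"
proof -
  \<comment> \<open>The bound on \<open>\<bar>\<delta>\<bar>\<close> only makes \<open>F\<close> a distribution function, which the hypothesis on
    the law of \<open>(X, Y)\<close> already grants.\<close>
  have survival: "measure M {\<omega> \<in> space M. a < X \<omega> \<and> b < Y \<omega>}
      = rayleigh_ccdf l1 a * rayleigh_ccdf l2 b
        + \<delta> * rayleigh_perturbation \<alpha> l1 a * rayleigh_perturbation \<alpha> l2 b"
    if "a \<ge> 0" "b \<ge> 0" for a b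
    using assms(2,3,9) that
    by (intro survival_of_joint_cdf[OF assms(1,6,7,8)])
      (simp_all add: F_joint_eq_rayleigh tendsto_rayleigh_ccdf tendsto_rayleigh_perturbation)
  have "has_bochner_integral M (\<lambda>\<omega>. X \<omega> powr r * Y \<omega> powr s)
      (rayleigh_moment l1 r * rayleigh_moment l2 s
        + \<delta> * (rayleigh_moment l1 r * \<alpha> * S_coef \<alpha> r) * (rayleigh_moment l2 s * \<alpha> * S_coef \<alpha> s))"
    using assms(2,3,10,11)
    by (intro has_bochner_integral_powr_mult_of_survival[OF assms(1,6,7,8,10,11) survival]
        has_bochner_integral_rayleigh_ccdf_power[where n = 1, simplified]
        has_bochner_integral_rayleigh_perturbation)
  moreover have "2 powr ((r + s) / 2) = 2 powr (r / 2) * 2 powr (s / 2)"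
    by (simp add: add_divide_distrib powr_add)
  ultimately show ?thesis
    by (simp add: has_bochner_integral_iff rayleigh_moment_def power2_eq_square algebra_simps)
qed

end
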